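(* Let $n=3/16$ and let $(a_i)_{i\ge0}$, $(b_i)_{i\ge0}$ be defined by $a_0=1$, $a_{i+1}=\frac{i(i+1)+n}{(i+1)(i+2)}a_i$ for $i\ge0$, $b_0=1/n$, $b_1=-1$, and $b_{i+1}=\frac{(2i-1)a_{i-1}-(2i+1)a_i+\{(i-1)i+n\}b_i}{i(i+1)}$ for $i\ge1$. Then for all $0<l'<1$, $$v(l') = 1+\sum_{i=0}^\infty\left(-\tfrac{9}{8}\ln 2\; a_i + n\, b_{i+1} + n\, a_i\ln l'\right) l'^{\,i+1}.$$ Explicitly, the first terms are $$v(l')=1-\Big(\tfrac98\ln2+\tfrac{3}{16}\Big)l'-\Big(\tfrac{27}{256}\ln2-\tfrac{51}{1024}\Big)l'^2-\Big(\tfrac{315}{8192}\ln2-\tfrac{177}{8192}\Big)l'^3+\cdots + l'\ln l'\Big(\tfrac{3}{16}+\tfrac{9}{512}l'+\tfrac{105}{16384}l'^2+\cdots\Big).$$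
   Context: For $0\le m<1$ let $K(m)=\int_0^{\pi/2}(1-m\sin^2\phi)^{-1/2}\,d\phi$ and $E(m)=\int_0^{\pi/2}(1-m\sin^2\phi)^{1/2}\,d\phi$ (complete elliptic integrals of the first and second kinds). For $0<l'\le 1$ let $m(l')=(1-\sqrt{l'})/(1+\sqrt{l'})$. The Principal Field Emission Elliptic Function is $$v(l')=(1+\sqrt{l'})^{1/2}\left[E(m(l'))-\sqrt{l'}\,K(m(l'))\right],\qquad 0<l'\le 1.$$ *)

theory Defs
  imports "HOL-Analysis.Analysis"
begin

definition ellK :: "real \<Rightarrow> real" where
  "ellK m = integral {0..pi/2} (\<lambda>\<phi>. 1 / sqrt (1 - m * (sin \<phi>)^2))"

definition ellE :: "real \<Rightarrow> real" where
  "ellE m = integral {0..pi/2} (\<lambda>\<phi>. sqrt (1 - m * (sin \<phi>)^2))"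

definition mfe :: "real \<Rightarrow> real" where
  "mfe l = (1 - sqrt l) / (1 + sqrt l)"

definition vfe :: "real \<Rightarrow> real" where
  "vfe l = sqrt (1 + sqrt l) * (ellE (mfe l) - sqrt l * ellK (mfe l))"

definition nfe :: real where "nfe = 3/16"

fun afe :: "nat \<Rightarrow> real" where
  "afe 0 = 1"
| "afe (Suc i) = (real i * (real i + 1) + nfe) / ((real i + 1) * (real i + 2)) * afe i"

text \<open>bfe (Suc (Suc i)) is b_{j+1} with j = i+1 \<ge> 1.\<close>
fun bfe :: "nat \<Rightarrow> real" where
  "bfe 0 = 1 / nfe"
| "bfe (Suc 0) = -1"
| "bfe (Suc (Suc i)) =
     ((2 * real (Suc i) - 1) * afe i - (2 * real (Suc i) + 1) * afe (Suc i)
      + (real i * real (Suc i) + nfe) * bfe (Suc i)) / (real (Suc i) * (real (Suc i) + 1))"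

end

theory Submission
  imports Defs "HOL-Real_Asymp.Real_Asymp"
begin

(* Put nu = 3/16.  Both v and the claimed expansion solve the linear equation
   l (1 - l) y'' = nu y on (0,1):
   - for the series W = -(9/8) ln 2 A + nu B + nu ln l A, with A = sum a_i l^(i+1) and
     B = sum b_i l^i, this is the Frobenius method: the recurrences for a_i and b_i are
     exactly the coefficient conditions of the equation (Sections 1-3);
   - for v it follows from Legendre's formulas for dK/dm and dE/dm, which give
     v' = -(3/4) K(m) / sqrt(1 + sqrt l) and v'' = nu v / (l (1 - l)) (Sections 5-6).
   Both satisfy y -> 1 and y' - nu ln l -> -(9/8) ln 2 as l -> 0+; for v this rests on
   the logarithmic singularity K(1 - e) = ln (4 / sqrt e) + o(1) (Section 7).  Hence
   W - v solves the equation with zero data at 0+, and a uniqueness theorem for this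
   singular equation (Section 4) gives W = v; the series for v - 1 is then read off. *)

section \<open>The coefficient sequences\<close>

text \<open>The recurrence for the sequence \<open>afe\<close> multiplies by a factor in \<open>[0,1]\<close>, so
  \<open>0 < a\<^sub>i \<le> 1\<close>; this is all the growth information the power series need.\<close>

lemma afe_pos: "0 < afe i"
proof (induction i)
  case (Suc i)
  have "0 < (real i * (real i + 1) + nfe) / ((real i + 1) * (real i + 2))"
    by (simp add: nfe_def add_nonneg_pos)
  then show ?case unfolding afe.simps using Suc by (rule mult_pos_pos)
qed simp

lemma afe_le_one: "afe i \<le> 1"
proof (induction i)
  case (Suc i)
  have "(real i * (real i + 1) + nfe) / ((real i + 1) * (real i + 2)) \<le> 1"
    by (simp add: nfe_def divide_le_eq algebra_simps)
       (smt (verit) of_nat_0_le_iff zero_le_mult_iff)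
  then show ?case
    unfolding afe.simps by (rule mult_le_one) (use Suc afe_pos[of i] in \<open>auto simp: nfe_def\<close>)
qed simp

lemma abs_afe_le_one: "\<bar>afe i\<bar> \<le> 1"
  using afe_pos[of i] afe_le_one[of i] by simp

declare afe.simps(2)[simp del]

text \<open>The coefficients \<open>b\<^sub>i\<close> grow at most linearly: the recurrence adds at most
  \<open>4/(i+2) \<le> 2\<close> to \<open>|b\<^sub>i|\<close> in each step.\<close>

lemma abs_bfe_le: "\<bar>bfe i\<bar> \<le> 2 * real i + 6"
proof (induction i rule: bfe.induct)
  case (3 i)
  let ?k = "real (Suc i)"
  have den: "0 < ?k * (?k + 1)" by simp
  have "\<bar>(2 * ?k - 1) * afe i\<bar> \<le> 2 * ?k - 1" "\<bar>(2 * ?k + 1) * afe (Suc i)\<bar> \<le> 2 * ?k + 1"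
    using abs_afe_le_one[of i] abs_afe_le_one[of "Suc i"]
    by (simp_all add: abs_mult mult_left_le)
  moreover have "\<bar>(real i * ?k + nfe) * bfe (Suc i)\<bar> \<le> ?k * (?k + 1) * \<bar>bfe (Suc i)\<bar>"
    by (simp add: abs_mult nfe_def) (intro mult_right_mono; simp add: field_simps)
  ultimately have "\<bar>(2 * ?k - 1) * afe i - (2 * ?k + 1) * afe (Suc i) + (real i * ?k + nfe) * bfe (Suc i)\<bar>
        \<le> 4 * ?k + ?k * (?k + 1) * \<bar>bfe (Suc i)\<bar>"
    by linarith
  then have "\<bar>bfe (Suc (Suc i))\<bar> \<le> (4 * ?k + ?k * (?k + 1) * \<bar>bfe (Suc i)\<bar>) / (?k * (?k + 1))"
    using den by (simp add: abs_divide divide_right_mono)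
  also have "\<dots> = 4 / (?k + 1) + \<bar>bfe (Suc i)\<bar>"
    using den by (simp add: field_simps)
  also have "\<dots> \<le> 2 + \<bar>bfe (Suc i)\<bar>"
    by (simp add: field_simps)
  finally show ?case using "3" by simp
qed (simp_all add: nfe_def)


section \<open>Power series converging on the open unit interval\<close>

definition powser :: "(nat \<Rightarrow> real) \<Rightarrow> real \<Rightarrow> real" where
  "powser c x = (\<Sum>n. c n * x ^ n)"

definition unit_radius :: "(nat \<Rightarrow> real) \<Rightarrow> bool" where
  "unit_radius c \<longleftrightarrow> (\<forall>x. \<bar>x\<bar> < 1 \<longrightarrow> summable (\<lambda>n. c n * x ^ n))"

text \<open>Coefficients of linear growth give radius at least 1, by comparison with
  \<open>\<Sum> (n+1) |x|\<^sup>n\<close>, the derivative of the geometric series.\<close>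

lemma unit_radius_linear_growth:
  assumes "\<And>n. \<bar>c n\<bar> \<le> C * real (Suc n)"
  shows "unit_radius c"
  unfolding unit_radius_def
proof (intro allI impI)
  fix x :: real assume x: "\<bar>x\<bar> < 1"
  have "summable (\<lambda>n. diffs (\<lambda>_. 1::real) n * \<bar>x\<bar> ^ n)"
    by (rule termdiff_converges[where K=1]) (use x in \<open>auto intro: summable_geometric\<close>)
  then have geom': "summable (\<lambda>n. C * (real (Suc n) * \<bar>x\<bar> ^ n))"
    by (simp add: diffs_def summable_mult)
  show "summable (\<lambda>n. c n * x ^ n)"
  proof (rule summable_comparison_test[OF _ geom'], intro exI allI impI)
    fix n :: nat
    have "\<bar>c n\<bar> * \<bar>x\<bar> ^ n \<le> (C * real (Suc n)) * \<bar>x\<bar> ^ n"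
      using assms[of n] by (intro mult_right_mono) auto
    then show "norm (c n * x ^ n) \<le> C * (real (Suc n) * \<bar>x\<bar> ^ n)"
      by (simp add: abs_mult power_abs)
  qed
qed

lemma unit_radius_diffs: "unit_radius c \<Longrightarrow> unit_radius (diffs c)"
  unfolding unit_radius_def by (auto intro!: termdiff_converges[where K=1])

lemma powser_sums: "unit_radius c \<Longrightarrow> \<bar>x\<bar> < 1 \<Longrightarrow> (\<lambda>n. c n * x ^ n) sums powser c x"
  unfolding unit_radius_def powser_def by (auto intro!: summable_sums)

lemma powser_deriv:
  "unit_radius c \<Longrightarrow> \<bar>x\<bar> < 1 \<Longrightarrow> (powser c has_real_derivative powser (diffs c) x) (at x)"
  unfolding powser_def unit_radius_def by (rule termdiffs_strong'[where K=1]) auto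

lemma powser_tendsto_0: "unit_radius c \<Longrightarrow> (powser c \<longlongrightarrow> c 0) (at_right 0)"
proof -
  assume c: "unit_radius c"
  have "isCont (powser c) 0" by (rule DERIV_isCont[OF powser_deriv[OF c]]) simp
  then have "(powser c \<longlongrightarrow> powser c 0) (at 0)" by (simp add: isCont_def)
  then show ?thesis
    unfolding powser_def powser_zero by (rule filterlim_mono) (auto simp: at_le)
qed

definition shift :: "(nat \<Rightarrow> real) \<Rightarrow> nat \<Rightarrow> real" where
  "shift c n = (if n = 0 then 0 else c (n - 1))"

lemma sums_shift:
  assumes "(\<lambda>n. c n * x ^ n) sums s"
  shows "(\<lambda>n. shift c n * x ^ n) sums (x * s)"
proof -
  have "(\<lambda>n. shift c (Suc n) * x ^ Suc n) sums (x * s)"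
    using sums_mult[OF assms, of x] by (simp add: shift_def algebra_simps)
  from sums_Suc[OF this] show ?thesis by (simp add: shift_def)
qed

lemma powser_shift: "unit_radius c \<Longrightarrow> \<bar>x\<bar> < 1 \<Longrightarrow> powser (shift c) x = x * powser c x"
  unfolding powser_def[of "shift c"] by (metis sums_shift powser_sums sums_unique)

lemma unit_radius_shift:
  assumes "\<And>n. \<bar>c n\<bar> \<le> C * real (Suc n)" and "0 \<le> C"
  shows "unit_radius (shift c)"
proof (rule unit_radius_linear_growth)
  fix n show "\<bar>shift c n\<bar> \<le> C * real (Suc n)"
    using assms(1)[of "n - 1"] mult_left_mono[OF _ assms(2), of "real n" "real (Suc n)"]
    by (cases n) (auto simp: shift_def)
qed

lemma sums_times_index:
  assumes "unit_radius c" "\<bar>x\<bar> < 1"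
  shows "(\<lambda>n. (real n * c n) * x ^ n) sums (x * powser (diffs c) x)"
proof -
  have "(\<lambda>n. (real (Suc n) * c (Suc n)) * x ^ Suc n) sums (x * powser (diffs c) x)"
    using sums_mult[OF powser_sums[OF unit_radius_diffs[OF assms(1)] assms(2)], of x]
    by (simp add: diffs_def algebra_simps)
  from sums_Suc[OF this] show ?thesis by simp
qed

text \<open>The hypergeometric-type operator \<open>x (1 - x) d\<^sup>2/dx\<^sup>2\<close> on coefficients: this turns
  the differential equations below into recurrences for the coefficients.\<close>

lemma sums_ode_operator:
  assumes "unit_radius c" "\<bar>x\<bar> < 1"
  shows "(\<lambda>n. (real n * diffs c n - shift (\<lambda>k. real k * diffs c k) n) * x ^ n)
           sums (x * (1 - x) * powser (diffs (diffs c)) x)"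
proof -
  note s = sums_times_index[OF unit_radius_diffs[OF assms(1)] assms(2)]
  have "(\<lambda>n. real n * diffs c n * x ^ n - shift (\<lambda>k. real k * diffs c k) n * x ^ n)
          sums (x * powser (diffs (diffs c)) x - x * (x * powser (diffs (diffs c)) x))"
    by (intro sums_diff s sums_shift)
  then show ?thesis by (simp add: algebra_simps)
qed


section \<open>The logarithmic Frobenius solution\<close>

text \<open>With \<open>A(x) = \<Sum> a\<^sub>i x\<^sup>i\<^sup>+\<^sup>1\<close> (coefficients \<open>shift afe\<close>) and
  \<open>B(x) = \<Sum> b\<^sub>i x\<^sup>i\<close>, the function \<open>W = -(9/8) ln 2 \<cdot> A + \<nu> B + \<nu> ln x \<cdot> A\<close> solves
  \<open>x (1 - x) W'' = \<nu> W\<close> on \<open>(0,1)\<close>: \<open>A\<close> is the regular solution, and \<open>B\<close> satisfies the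
  inhomogeneous equation whose right-hand side \<open>(1 - x) G\<close> comes from differentiating
  \<open>ln x \<cdot> A\<close>, where \<open>G\<close> has coefficients \<open>(2i+1) a\<^sub>i\<close>.\<close>

definition gfe :: "nat \<Rightarrow> real" where
  "gfe n = (2 * real n + 1) * afe n"

lemma unit_radius_afe: "unit_radius afe"
  by (rule unit_radius_linear_growth[where C=1]) (rule order_trans[OF abs_afe_le_one], simp)

lemma unit_radius_shift_afe: "unit_radius (shift afe)"
  by (rule unit_radius_shift[where C=1]) (rule order_trans[OF abs_afe_le_one], simp_all)

lemma unit_radius_bfe: "unit_radius bfe"
  by (rule unit_radius_linear_growth[where C=6]) (rule order_trans[OF abs_bfe_le], simp)

lemma unit_radius_gfe: "unit_radius gfe"
proof (rule unit_radius_linear_growth[where C=2])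
  fix n
  have "\<bar>gfe n\<bar> \<le> (2 * real n + 1) * 1"
    using abs_afe_le_one[of n] by (simp add: gfe_def abs_mult mult_left_mono)
  then show "\<bar>gfe n\<bar> \<le> 2 * real (Suc n)" by simp
qed

text \<open>The recurrence for \<open>a\<^sub>i\<close> is the coefficient form of \<open>x (1 - x) A'' = \<nu> A\<close>.\<close>

lemma afe_recurrence_coeffs:
  "real n * diffs (shift afe) n - shift (\<lambda>k. real k * diffs (shift afe) k) n = nfe * shift afe n"
proof (cases n)
  case (Suc k)
  have "(real k + 1) * (real k + 2) \<noteq> 0" by simp
  then have "afe (Suc k) * ((real k + 1) * (real k + 2)) = (real k * (real k + 1) + nfe) * afe k"
    unfolding afe.simps by (simp add: field_simps)
  then show ?thesis using Suc by (simp add: shift_def diffs_def algebra_simps)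
qed (simp add: shift_def)

text \<open>The recurrence for \<open>b\<^sub>i\<close> is the coefficient form of \<open>x (1 - x) B'' = \<nu> B - (1 - x) G\<close>.\<close>

lemma bfe_recurrence_coeffs:
  "real n * diffs bfe n - shift (\<lambda>k. real k * diffs bfe k) n = nfe * bfe n - (gfe n - shift gfe n)"
proof (cases n)
  case (Suc k)
  have "bfe (Suc (Suc k)) * (real (Suc k) * (real (Suc k) + 1)) =
     (2 * real (Suc k) - 1) * afe k - (2 * real (Suc k) + 1) * afe (Suc k)
      + (real k * real (Suc k) + nfe) * bfe (Suc k)"
  proof -
    have "real (Suc k) * (real (Suc k) + 1) \<noteq> 0" by simp
    then show ?thesis by (simp only: bfe.simps) (simp add: field_simps)
  qed
  then show ?thesis using Suc
    by (simp add: shift_def gfe_def diffs_def algebra_simps del: bfe.simps)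
qed (simp add: shift_def gfe_def nfe_def diffs_def)

lemma A_ode:
  assumes "\<bar>x\<bar> < 1"
  shows "x * (1 - x) * powser (diffs (diffs (shift afe))) x = nfe * powser (shift afe) x"
proof -
  have "(\<lambda>n. nfe * shift afe n * x ^ n) sums (x * (1 - x) * powser (diffs (diffs (shift afe))) x)"
    using sums_ode_operator[OF unit_radius_shift_afe assms] by (simp add: afe_recurrence_coeffs)
  moreover have "(\<lambda>n. nfe * shift afe n * x ^ n) sums (nfe * powser (shift afe) x)"
    using sums_mult[OF powser_sums[OF unit_radius_shift_afe assms], of nfe] by (simp add: mult.assoc)
  ultimately show ?thesis by (rule sums_unique2)
qed

lemma B_ode:
  assumes "\<bar>x\<bar> < 1"
  shows "x * (1 - x) * powser (diffs (diffs bfe)) x = nfe * powser bfe x - (1 - x) * powser gfe x"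
proof -
  note G = powser_sums[OF unit_radius_gfe assms]
  have "(\<lambda>n. (nfe * bfe n - (gfe n - shift gfe n)) * x ^ n)
          sums (x * (1 - x) * powser (diffs (diffs bfe)) x)"
    using sums_ode_operator[OF unit_radius_bfe assms] by (simp add: bfe_recurrence_coeffs)
  moreover have "(\<lambda>n. nfe * (bfe n * x ^ n) - (gfe n * x ^ n - shift gfe n * x ^ n))
          sums (nfe * powser bfe x - (powser gfe x - x * powser gfe x))"
    by (intro sums_diff sums_mult powser_sums[OF unit_radius_bfe assms] G sums_shift[OF G])
  moreover have "(\<lambda>n. nfe * (bfe n * x ^ n) - (gfe n * x ^ n - shift gfe n * x ^ n))
          = (\<lambda>n. (nfe * bfe n - (gfe n - shift gfe n)) * x ^ n)"
    by (simp add: algebra_simps)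
  ultimately have "x * (1 - x) * powser (diffs (diffs bfe)) x
      = nfe * powser bfe x - (powser gfe x - x * powser gfe x)"
    by (metis sums_unique2)
  then show ?thesis by (simp add: algebra_simps)
qed

lemma G_eq:
  assumes "\<bar>x\<bar> < 1"
  shows "x * powser (diffs afe) x + powser (diffs (shift afe)) x = powser gfe x"
proof -
  have "(\<lambda>n. (real n * afe n) * x ^ n + diffs (shift afe) n * x ^ n)
          sums (x * powser (diffs afe) x + powser (diffs (shift afe)) x)"
    by (intro sums_add sums_times_index[OF unit_radius_afe assms]
        powser_sums[OF unit_radius_diffs[OF unit_radius_shift_afe] assms])
  moreover have "(\<lambda>n. (real n * afe n) * x ^ n + diffs (shift afe) n * x ^ n) = (\<lambda>n. gfe n * x ^ n)"
    by (auto simp: diffs_def shift_def gfe_def algebra_simps)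
  ultimately show ?thesis using powser_sums[OF unit_radius_gfe assms] by (metis sums_unique2)
qed

definition W :: "real \<Rightarrow> real" where
  "W x = - (9/8) * ln 2 * powser (shift afe) x + nfe * powser bfe x
         + nfe * ln x * powser (shift afe) x"

definition W' :: "real \<Rightarrow> real" where
  "W' x = - (9/8) * ln 2 * powser (diffs (shift afe)) x + nfe * powser (diffs bfe) x
          + nfe * (powser afe x + ln x * powser (diffs (shift afe)) x)"

definition W'' :: "real \<Rightarrow> real" where
  "W'' x = - (9/8) * ln 2 * powser (diffs (diffs (shift afe))) x + nfe * powser (diffs (diffs bfe)) x
          + nfe * (powser (diffs afe) x + (inverse x * powser (diffs (shift afe)) x
                   + powser (diffs (diffs (shift afe))) x * ln x))"

lemma W_deriv:
  assumes x: "0 < x" "x < 1"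
  shows "(W has_real_derivative W' x) (at x)"
proof -
  have ax: "\<bar>x\<bar> < 1" using x by simp
  note dA = powser_deriv[OF unit_radius_shift_afe ax]
  have "((\<lambda>x. - (9/8) * ln 2 * powser (shift afe) x + nfe * powser bfe x
               + nfe * ln x * powser (shift afe) x) has_real_derivative
         - (9/8) * ln 2 * powser (diffs (shift afe)) x + nfe * powser (diffs bfe) x
           + (nfe * inverse x * powser (shift afe) x + powser (diffs (shift afe)) x * (nfe * ln x))) (at x)"
    by (intro DERIV_add DERIV_cmult DERIV_mult dA powser_deriv[OF unit_radius_bfe ax] DERIV_ln x(1))
  moreover have "inverse x * powser (shift afe) x = powser afe x"
    using powser_shift[OF unit_radius_afe ax] x by simp
  ultimately show ?thesis
    unfolding W_def[abs_def] W'_def by (simp add: algebra_simps)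
qed

lemma W'_deriv:
  assumes x: "0 < x" "x < 1"
  shows "(W' has_real_derivative W'' x) (at x)"
proof -
  have ax: "\<bar>x\<bar> < 1" using x by simp
  show ?thesis
    unfolding W'_def[abs_def] W''_def
    by (intro DERIV_add DERIV_cmult DERIV_mult DERIV_ln x(1)
        powser_deriv[OF unit_radius_diffs[OF unit_radius_shift_afe] ax]
        powser_deriv[OF unit_radius_diffs[OF unit_radius_bfe] ax]
        powser_deriv[OF unit_radius_afe ax])
qed

text \<open>\<open>W\<close> solves \<open>x (1 - x) W'' = \<nu> W\<close>: the \<open>ln x\<close>-terms cancel by the equation for \<open>A\<close>,
  and the remaining terms by the equation for \<open>B\<close> together with \<open>G = x A\<^sub>0' + A'\<close>.\<close>

lemma W_ode:
  assumes x: "0 < x" "x < 1"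
  shows "x * (1 - x) * W'' x = nfe * W x"
proof -
  have ax: "\<bar>x\<bar> < 1" using x by simp
  have G: "x * (1 - x) * (powser (diffs afe) x + inverse x * powser (diffs (shift afe)) x)
             = (1 - x) * powser gfe x"
    using x G_eq[OF ax] by (simp add: field_simps)
  have "x * (1 - x) * W'' x
      = - (9/8) * ln 2 * (x * (1 - x) * powser (diffs (diffs (shift afe))) x)
        + nfe * (x * (1 - x) * powser (diffs (diffs bfe)) x)
        + nfe * (x * (1 - x) * (powser (diffs afe) x + inverse x * powser (diffs (shift afe)) x))
        + nfe * ln x * (x * (1 - x) * powser (diffs (diffs (shift afe))) x)"
    unfolding W''_def by algebra
  also have "\<dots> = nfe * W x"
    unfolding G A_ode[OF ax] B_ode[OF ax] W_def by (simp add: algebra_simps)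
  finally show ?thesis .
qed

lemma eventually_at_right_0_unit: "eventually (\<lambda>x. 0 < x \<and> x < (1::real)) (at_right 0)"
  by (rule eventually_at_rightI[of 0 1]) auto

lemma tendsto_x_ln_x: "((\<lambda>x::real. x * ln x) \<longlongrightarrow> 0) (at_right 0)"
  by real_asymp

lemma W_tendsto_0: "(W \<longlongrightarrow> 1) (at_right 0)"
proof -
  have lim: "((\<lambda>x. - (9/8) * ln 2 * powser (shift afe) x + nfe * powser bfe x
             + nfe * ((x * ln x) * powser afe x))
      \<longlongrightarrow> - (9/8) * ln 2 * shift afe 0 + nfe * bfe 0 + nfe * (0 * afe 0)) (at_right 0)"
    by (intro tendsto_add tendsto_mult_left tendsto_mult tendsto_x_ln_x
        powser_tendsto_0 unit_radius_shift_afe unit_radius_bfe unit_radius_afe)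
  have val: "- (9/8) * ln 2 * shift afe 0 + nfe * bfe 0 + nfe * (0 * afe 0) = 1"
    by (simp add: shift_def nfe_def)
  have ev: "\<forall>\<^sub>F x in at_right 0. - (9/8) * ln 2 * powser (shift afe) x + nfe * powser bfe x
             + nfe * ((x * ln x) * powser afe x) = W x"
    using eventually_at_right_0_unit
    by eventually_elim (simp add: W_def powser_shift[OF unit_radius_afe])
  show ?thesis using Lim_transform_eventually[OF lim ev] unfolding val .
qed

lemma W'_tendsto_0: "((\<lambda>x. W' x - nfe * ln x) \<longlongrightarrow> - (9/8) * ln 2) (at_right 0)"
proof -
  let ?A' = "powser (diffs (shift afe))"
  have A': "unit_radius (diffs (shift afe))"
    by (rule unit_radius_diffs[OF unit_radius_shift_afe])
  have A'_0: "?A' 0 = 1"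
    by (simp add: powser_def powser_zero diffs_def shift_def)
  have "((\<lambda>y. (?A' y - ?A' 0) / (y - 0)) \<longlongrightarrow> powser (diffs (diffs (shift afe))) 0) (at 0)"
    using powser_deriv[OF A', of 0] unfolding has_field_derivative_iff by simp
  then have quotient: "((\<lambda>y. (?A' y - 1) / y) \<longlongrightarrow> powser (diffs (diffs (shift afe))) 0) (at_right 0)"
    unfolding A'_0 diff_zero by (rule filterlim_mono) (auto simp: at_le)
  have lim: "((\<lambda>x. - (9/8) * ln 2 * ?A' x + nfe * powser (diffs bfe) x + nfe * powser afe x
             + nfe * ((x * ln x) * ((?A' x - 1) / x)))
      \<longlongrightarrow> - (9/8) * ln 2 * diffs (shift afe) 0 + nfe * diffs bfe 0 + nfe * afe 0
             + nfe * (0 * powser (diffs (diffs (shift afe))) 0)) (at_right 0)"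
    by (intro tendsto_add tendsto_mult_left tendsto_mult tendsto_x_ln_x quotient
        powser_tendsto_0 A' unit_radius_diffs[OF unit_radius_bfe] unit_radius_afe)
  have val: "- (9/8) * ln 2 * diffs (shift afe) 0 + nfe * diffs bfe 0 + nfe * afe 0
             + nfe * (0 * powser (diffs (diffs (shift afe))) 0) = - (9/8) * ln 2"
    by (simp add: shift_def diffs_def)
  have ev: "\<forall>\<^sub>F x in at_right 0. - (9/8) * ln 2 * ?A' x + nfe * powser (diffs bfe) x
             + nfe * powser afe x + nfe * ((x * ln x) * ((?A' x - 1) / x)) = W' x - nfe * ln x"
    using eventually_at_right_0_unit by eventually_elim (simp add: W'_def field_simps)
  show ?thesis using Lim_transform_eventually[OF lim ev] unfolding val .
qed


section \<open>Uniqueness for the equation \<open>x (1 - x) y'' = \<nu> y\<close>\<close>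

text \<open>A solution on \<open>(0,1)\<close> with \<open>y, y' \<rightarrow> 0\<close> at \<open>0\<close> vanishes identically if \<open>0 \<le> \<nu> < 1\<close>.
  Near \<open>0\<close> this is a contraction argument for \<open>M = max |y'|\<close> on \<open>[0,1/2]\<close>, and on
  \<open>[1/2,1)\<close> an energy estimate propagates the zero initial data.\<close>

text \<open>Extending a function on \<open>(0,1)\<close> by \<open>0\<close> at \<open>0\<close> keeps its derivatives at interior
  points and, given a zero limit at \<open>0\<^sup>+\<close>, makes it continuous on \<open>[0,b]\<close>; this is what the
  mean value theorem needs.\<close>

lemma zero_extension_deriv:
  fixes f :: "real \<Rightarrow> real"
  assumes "(f has_real_derivative D) (at z)" "0 < z"
  shows "((\<lambda>y. if y = 0 then 0 else f y) has_real_derivative D) (at z)"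
  by (rule has_field_derivative_transform_within_open[OF assms(1), of "{0<..}"]) (use assms in auto)

lemma zero_extension_continuous:
  fixes f f' :: "real \<Rightarrow> real"
  assumes d: "\<And>x. 0 < x \<Longrightarrow> x < 1 \<Longrightarrow> (f has_real_derivative f' x) (at x)"
    and l: "(f \<longlongrightarrow> 0) (at_right 0)"
    and b: "0 < b" "b < 1"
  shows "continuous_on {0..b} (\<lambda>y. if y = 0 then 0 else f y)"
proof (rule continuous_on_IccI)
  let ?g = "\<lambda>y. if y = 0 then 0 else f y"
  have "(?g \<longlongrightarrow> 0) (at_right 0)"
    by (rule Lim_transform_within[OF l zero_less_one]) auto
  then show "(?g \<longlongrightarrow> ?g 0) (at_right 0)" by simp
  have "isCont ?g b" using zero_extension_deriv[OF d[OF b] b(1)] by (rule DERIV_isCont)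
  then show "(?g \<longlongrightarrow> ?g b) (at_left b)"
    by (simp add: isCont_def filterlim_at_split)
  fix x assume "0 < x" "x < b"
  then have "isCont ?g x" using zero_extension_deriv[OF d, of x] b by (auto intro: DERIV_isCont)
  then show "?g \<midarrow>x\<rightarrow> ?g x" by (simp add: isCont_def)
qed fact

lemma abs_le_by_deriv_bound:
  fixes f f' :: "real \<Rightarrow> real"
  assumes d: "\<And>x. 0 < x \<Longrightarrow> x < 1 \<Longrightarrow> (f has_real_derivative f' x) (at x)"
    and l: "(f \<longlongrightarrow> 0) (at_right 0)" and y: "0 < y" "y < 1"
    and M: "\<And>z. 0 < z \<Longrightarrow> z < y \<Longrightarrow> \<bar>f' z\<bar> \<le> M"
  shows "\<bar>f y\<bar> \<le> y * M"
proof -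
  define g where "g = (\<lambda>y. if y = 0 then 0 else f y)"
  have deriv: "(g has_real_derivative f' z) (at z)" if "0 < z" "z < y" for z
    unfolding g_def using that y by (intro zero_extension_deriv d) auto
  have "\<exists>D z. 0 < z \<and> z < y \<and> (g has_real_derivative D) (at z) \<and> g y - g 0 = (y - 0) * D"
    by (rule MVT[OF y(1)]) (use zero_extension_continuous[OF d l y] deriv
        in \<open>auto simp: g_def real_differentiable_def\<close>)
  then obtain D z where z: "0 < z" "z < y" "(g has_real_derivative D) (at z)" "g y = y * D"
    by (auto simp: g_def)
  have "D = f' z" using DERIV_unique[OF z(3) deriv[OF z(1,2)]] .
  then have "\<bar>f y\<bar> = y * \<bar>f' z\<bar>" using z y by (simp add: g_def abs_mult)
  also have "\<dots> \<le> y * M" using M[OF z(1,2)] y by (intro mult_left_mono) auto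
  finally show ?thesis .
qed

text \<open>With \<open>M = max |y'|\<close> on \<open>[0,1/2]\<close>: \<open>|y(z)| \<le> z M\<close>, hence \<open>|y''| \<le> 2 \<nu> M\<close> by the
  equation, hence \<open>M \<le> \<nu> M\<close> by the mean value theorem again; so \<open>M = 0\<close>.\<close>

lemma ode_solution_vanishes_near_0:
  fixes D D1 D2 :: "real \<Rightarrow> real" and \<nu> :: real
  assumes d1: "\<And>x. 0 < x \<Longrightarrow> x < 1 \<Longrightarrow> (D has_real_derivative D1 x) (at x)"
    and d2: "\<And>x. 0 < x \<Longrightarrow> x < 1 \<Longrightarrow> (D1 has_real_derivative D2 x) (at x)"
    and ode: "\<And>x. 0 < x \<Longrightarrow> x < 1 \<Longrightarrow> x * (1 - x) * D2 x = \<nu> * D x"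
    and \<nu>: "0 \<le> \<nu>" "\<nu> < 1"
    and l0: "(D \<longlongrightarrow> 0) (at_right 0)" and l1: "(D1 \<longlongrightarrow> 0) (at_right 0)"
    and y: "0 < y" "y \<le> 1/2"
  shows "D y = 0 \<and> D1 y = 0"
proof -
  define g where "g = (\<lambda>y. if y = 0 then 0 else D1 y)"
  have "continuous_on {0..1/2} (\<lambda>y. \<bar>g y\<bar>)"
    unfolding g_def by (intro continuous_on_rabs zero_extension_continuous[OF d2 l1]) auto
  then obtain x0 where x0: "x0 \<in> {0..1/2}" and max: "\<And>z. z \<in> {0..1/2} \<Longrightarrow> \<bar>g z\<bar> \<le> \<bar>g x0\<bar>"
    using continuous_attains_sup[of "{0..1/2}" "\<lambda>y. \<bar>g y\<bar>"] by auto
  define M where "M = \<bar>g x0\<bar>"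
  have D1_le: "\<bar>D1 z\<bar> \<le> M" if "0 < z" "z \<le> 1/2" for z
    using max[of z] that by (simp add: M_def g_def)
  have D_le: "\<bar>D z\<bar> \<le> z * M" if "0 < z" "z \<le> 1/2" for z
    using that by (intro abs_le_by_deriv_bound[OF d1 l0] D1_le) auto
  have D2_le: "\<bar>D2 z\<bar> \<le> 2 * \<nu> * M" if z: "0 < z" "z \<le> 1/2" for z
  proof -
    have "z * ((1 - z) * \<bar>D2 z\<bar>) = \<nu> * \<bar>D z\<bar>"
      using arg_cong[OF ode[of z], of abs] z \<nu> by (simp add: abs_mult mult.assoc)
    also have "\<dots> \<le> z * (\<nu> * M)"
      using mult_left_mono[OF D_le[OF z] \<nu>(1)] by (simp add: algebra_simps)
    finally have "(1 - z) * \<bar>D2 z\<bar> \<le> \<nu> * M" using z(1) by simp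
    moreover have "(1/2) * \<bar>D2 z\<bar> \<le> (1 - z) * \<bar>D2 z\<bar>" using z by (intro mult_right_mono) auto
    ultimately show ?thesis by simp
  qed
  have "M \<le> \<nu> * M"
  proof (cases "x0 = 0")
    case False
    then have x0': "0 < x0" "x0 < 1" using x0 by auto
    have "M = \<bar>D1 x0\<bar>" using False by (simp add: M_def g_def)
    also have "\<dots> \<le> x0 * (2 * \<nu> * M)"
      by (rule abs_le_by_deriv_bound[OF d2 l1 x0']) (use x0 in \<open>auto intro: D2_le\<close>)
    also have "\<dots> \<le> (1/2) * (2 * \<nu> * M)"
      using x0 \<nu> by (intro mult_right_mono) (auto simp: M_def)
    finally show ?thesis by simp
  qed (simp add: M_def g_def)
  then have "M = 0" using \<nu> by (smt (verit) M_def abs_ge_zero mult_le_cancel_right1)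
  then show ?thesis using D_le[OF y] D1_le[OF y] by simp
qed

text \<open>Energy estimate: \<open>(y\<^sup>2 + y'\<^sup>2) e\<^sup>-\<^sup>(\<^sup>1\<^sup>+\<^sup>P\<^sup>)\<^sup>x\<close> is non-increasing on \<open>[a,x]\<close> for
  \<open>P = \<nu> / (a (1 - x))\<close>, so zero data at \<open>a\<close> propagate to \<open>x\<close>.\<close>

lemma ode_solution_vanishes_beyond:
  fixes D D1 D2 :: "real \<Rightarrow> real" and \<nu> :: real
  assumes d1: "\<And>x. 0 < x \<Longrightarrow> x < 1 \<Longrightarrow> (D has_real_derivative D1 x) (at x)"
    and d2: "\<And>x. 0 < x \<Longrightarrow> x < 1 \<Longrightarrow> (D1 has_real_derivative D2 x) (at x)"
    and ode: "\<And>x. 0 < x \<Longrightarrow> x < 1 \<Longrightarrow> x * (1 - x) * D2 x = \<nu> * D x"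
    and \<nu>: "0 \<le> \<nu>"
    and a: "0 < a" "D a = 0" "D1 a = 0" and x: "a \<le> x" "x < 1"
  shows "D x = 0"
proof -
  define P where "P = \<nu> / (a * (1 - x))"
  define F where "F = (\<lambda>y. (D y ^ 2 + D1 y ^ 2) * exp (- ((1 + P) * y)))"
  have "F x \<le> F a"
  proof (rule DERIV_nonpos_imp_nonincreasing[OF x(1)])
    fix y assume y: "a \<le> y" "y \<le> x"
    then have y01: "0 < y" "y < 1" using a x by auto
    let ?e = "exp (- ((1 + P) * y))"
    define p where "p = \<nu> / (y * (1 - y))"
    have D2p: "D2 y = p * D y" using ode[OF y01] y01 by (simp add: p_def field_simps)
    have p0: "0 \<le> p" using y01 \<nu> by (simp add: p_def)
    have "a * (1 - x) \<le> y * (1 - y)" using y a x by (intro mult_mono) auto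
    then have pP: "p \<le> P"
      unfolding p_def P_def using y01 a x \<nu> by (intro divide_left_mono) auto
    have "2 * D y * D1 y * (1 + p) \<le> (D y ^ 2 + D1 y ^ 2) * (1 + p)"
      by (intro mult_right_mono) (auto simp: p0 sum_squares_bound)
    also have "\<dots> \<le> (D y ^ 2 + D1 y ^ 2) * (1 + P)"
      by (intro mult_left_mono) (auto simp: pP)
    finally have "(2 * D y * D1 y + 2 * D1 y * D2 y - (1 + P) * (D y ^ 2 + D1 y ^ 2)) * ?e \<le> 0"
      by (intro mult_nonpos_nonneg) (auto simp: D2p algebra_simps)
    moreover have "(F has_real_derivative
        (2 * D y * D1 y + 2 * D1 y * D2 y - (1 + P) * (D y ^ 2 + D1 y ^ 2)) * ?e) (at y)"
      unfolding F_def
      by (rule derivative_eq_intros d1[OF y01] d2[OF y01] refl | simp add: algebra_simps)+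
    ultimately show "\<exists>d. (F has_real_derivative d) (at y) \<and> d \<le> 0" by blast
  qed
  also have "F a = 0" using a by (simp add: F_def)
  finally have "D x ^ 2 + D1 x ^ 2 \<le> 0" by (simp add: F_def mult_le_0_iff)
  then show ?thesis by (smt (verit) zero_le_power2 power_eq_0_iff)
qed

lemma ode_unique:
  fixes D D1 D2 :: "real \<Rightarrow> real" and \<nu> :: real
  assumes d1: "\<And>x. 0 < x \<Longrightarrow> x < 1 \<Longrightarrow> (D has_real_derivative D1 x) (at x)"
    and d2: "\<And>x. 0 < x \<Longrightarrow> x < 1 \<Longrightarrow> (D1 has_real_derivative D2 x) (at x)"
    and ode: "\<And>x. 0 < x \<Longrightarrow> x < 1 \<Longrightarrow> x * (1 - x) * D2 x = \<nu> * D x"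
    and \<nu>: "0 \<le> \<nu>" "\<nu> < 1"
    and l0: "(D \<longlongrightarrow> 0) (at_right 0)" and l1: "(D1 \<longlongrightarrow> 0) (at_right 0)"
    and x: "0 < x" "x < 1"
  shows "D x = 0"
proof (cases "x \<le> 1/2")
  case True
  then show ?thesis using ode_solution_vanishes_near_0[OF d1 d2 ode \<nu> l0 l1 x(1)] by simp
next
  case False
  have "D (1/2) = 0 \<and> D1 (1/2) = 0" by (rule ode_solution_vanishes_near_0[OF d1 d2 ode \<nu> l0 l1]) auto
  then show ?thesis
    using ode_solution_vanishes_beyond[OF d1 d2 ode \<nu>(1), of "1/2" x] False x by simp
qed


section \<open>Legendre's derivative formulas for \<open>K\<close> and \<open>E\<close>\<close>

lemma radicand_pos: fixes m x :: real shows "m < 1 \<Longrightarrow> 0 < 1 - m * (sin x)^2"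
proof -
  assume m: "m < 1"
  have s: "0 \<le> (sin x)^2" "(sin x)^2 \<le> 1" using abs_sin_le_one[of x] abs_square_le_1[of "sin x"] by auto
  show ?thesis
  proof (cases "m \<le> 0")
    case True then show ?thesis using s by (smt (verit) mult_nonpos_nonneg)
  next
    case False
    then have "m * (sin x)^2 \<le> m * 1" using s by (intro mult_left_mono) auto
    then show ?thesis using m by simp
  qed
qed

lemma radicand_ne: fixes m x :: real shows "m < 1 \<Longrightarrow> m * (sin x)^2 \<noteq> 1"
  using radicand_pos[of m x] by simp

lemma sqrt_radicand_ne: fixes m x :: real shows "m < 1 \<Longrightarrow> sqrt (1 - m * (sin x)^2) \<noteq> 0"
  using radicand_pos[of m x] by simp

lemma continuous_ellK_integrand:
  fixes m :: real
  shows "m < 1 \<Longrightarrow> continuous_on S (\<lambda>x::real. 1 / sqrt (1 - m * (sin x)^2))"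
  by (intro continuous_intros) (auto simp: sqrt_radicand_ne radicand_ne)

text \<open>The auxiliary complete integral \<open>J(m) = \<integral>\<^sub>0\<^sup>\<pi>\<^sup>/\<^sup>2 (1 - m sin\<^sup>2\<phi>)\<^sup>-\<^sup>3\<^sup>/\<^sup>2 d\<phi>\<close>, which appears in
  the derivative of \<open>K\<close>.\<close>

definition ellJ :: "real \<Rightarrow> real" where
  "ellJ m = integral {0..pi/2} (\<lambda>x. 1 / ((1 - m * (sin x)^2) * sqrt (1 - m * (sin x)^2)))"

lemma continuous_ellJ_integrand:
  fixes m :: real
  shows "m < 1 \<Longrightarrow> continuous_on S (\<lambda>x::real. 1 / ((1 - m * (sin x)^2) * sqrt (1 - m * (sin x)^2)))"
  by (intro continuous_intros) (auto simp: sqrt_radicand_ne radicand_ne)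

lemma integral_div_const:
  fixes f :: "real \<Rightarrow> real"
  shows "integral S (\<lambda>x. f x / c) = integral S f / c"
proof -
  have "(\<lambda>x. f x / c) = (\<lambda>x. (1/c) *\<^sub>R f x)" by auto
  then show ?thesis by simp
qed

text \<open>\<open>m sin\<phi> cos\<phi> / \<surd>(1 - m sin\<^sup>2\<phi>)\<close> is an antiderivative of
  \<open>\<surd>(1 - m sin\<^sup>2\<phi>) - (1 - m) (1 - m sin\<^sup>2\<phi>)\<^sup>-\<^sup>3\<^sup>/\<^sup>2\<close>; it vanishes at both ends of
  \<open>[0, \<pi>/2]\<close>, whence \<open>E = (1 - m) J\<close>.\<close>

lemma antideriv_algebra:
  fixes r m s c :: real
  assumes r: "0 < r" "r^2 = 1 - m * s^2" and sc: "s^2 + c^2 = 1"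
  shows "((c * c - s * s) * m * r + m * (s * c) * (inverse r * (c * (s * m)))) / (1 - m * s^2)
       = r - (1 - m) / ((1 - m * s^2) * r)"
  unfolding r(2)[symmetric] using r(1) by (simp add: field_simps) (use r sc in algebra)

lemma antideriv_deriv:
  fixes m x :: real
  assumes m: "m < 1"
  shows "((\<lambda>x. m * (sin x * cos x / sqrt (1 - m * (sin x)^2))) has_real_derivative
     (sqrt (1 - m * (sin x)^2) - (1 - m) / ((1 - m * (sin x)^2) * sqrt (1 - m * (sin x)^2)))) (at x)"
proof -
  have D: "0 < 1 - m * (sin x)^2" by (rule radicand_pos[OF m])
  have alg: "((cos x * cos x - sin x * sin x) * m * sqrt (1 - m * (sin x)\<^sup>2) +
     m * (sin x * cos x) * (inverse (sqrt (1 - m * (sin x)\<^sup>2)) * (cos x * (sin x * m)))) /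
    (1 - m * (sin x)\<^sup>2) =
    sqrt (1 - m * (sin x)\<^sup>2) - (1 - m) / ((1 - m * (sin x)\<^sup>2) * sqrt (1 - m * (sin x)\<^sup>2))"
    by (rule antideriv_algebra) (use D in auto)
  show ?thesis
    using D by (auto intro!: derivative_eq_intros simp: alg)
qed

lemma ellE_eq_ellJ:
  assumes m: "m < 1"
  shows "ellE m = (1 - m) * ellJ m"
proof -
  have "((\<lambda>x. sqrt (1 - m * (sin x)^2) - (1 - m) / ((1 - m * (sin x)^2) * sqrt (1 - m * (sin x)^2)))
        has_integral (m * (sin (pi/2) * cos (pi/2) / sqrt (1 - m * (sin (pi/2))^2))
                      - m * (sin 0 * cos 0 / sqrt (1 - m * (sin 0)^2)))) {0..pi/2}"
  proof (rule fundamental_theorem_of_calculus)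
    fix x :: real
    show "((\<lambda>x. m * (sin x * cos x / sqrt (1 - m * (sin x)^2))) has_vector_derivative
        (sqrt (1 - m * (sin x)^2) - (1 - m) / ((1 - m * (sin x)^2) * sqrt (1 - m * (sin x)^2))))
        (at x within {0..pi/2})"
      using antideriv_deriv[OF m, of x] unfolding has_real_derivative_iff_has_vector_derivative
      by (rule has_vector_derivative_at_within)
  qed simp
  then have zero: "integral {0..pi/2} (\<lambda>x. sqrt (1 - m * (sin x)^2)
                 - (1 - m) * (1 / ((1 - m * (sin x)^2) * sqrt (1 - m * (sin x)^2)))) = 0"
    by (simp add: integral_unique)
  have i1: "(\<lambda>x. sqrt (1 - m * (sin x)^2)) integrable_on {0..pi/2}"
    by (intro integrable_continuous_interval continuous_intros)
  have i2: "(\<lambda>x. (1 - m) * (1 / ((1 - m * (sin x)^2) * sqrt (1 - m * (sin x)^2))))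
      integrable_on {0..pi/2}"
    by (intro integrable_continuous_interval continuous_intros)
       (use m in \<open>auto simp: sqrt_radicand_ne radicand_ne\<close>)
  have "integral {0..pi/2} (\<lambda>x. (1 - m) * (1 / ((1 - m * (sin x)^2) * sqrt (1 - m * (sin x)^2))))
      = (1 - m) * ellJ m"
    unfolding ellJ_def
    by (subst integral_mult[symmetric]) (auto intro!: integrable_continuous_interval continuous_ellJ_integrand m)
  with zero show ?thesis
    unfolding integral_diff[OF i1 i2] ellE_def by simp
qed

lemma ellE_deriv:
  assumes m: "0 < m" "m < 1"
  shows "(ellE has_real_derivative (ellE m - ellK m) / (2 * m)) (at m)"
proof -
  let ?fx = "\<lambda>m x. - ((sin x)^2 / (2 * sqrt (1 - m * (sin x)^2)))"
  have L: "((\<lambda>m. integral (cbox 0 (pi/2)) (\<lambda>x. sqrt (1 - m * (sin x)^2))) has_field_derivative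
      integral (cbox 0 (pi/2)) (?fx m)) (at m within {..<1})"
  proof (rule leibniz_rule_field_derivative)
    fix m' x :: real assume "m' \<in> {..<1}" "x \<in> cbox 0 (pi/2)"
    then have D: "0 < 1 - m' * (sin x)^2" using radicand_pos by auto
    show "((\<lambda>m. sqrt (1 - m * (sin x)^2)) has_field_derivative ?fx m' x) (at m' within {..<1})"
      using D by (auto intro!: derivative_eq_intros simp: divide_simps)
  next
    fix m' :: real assume "m' \<in> {..<1}"
    then show "(\<lambda>x. sqrt (1 - m' * (sin x)^2)) integrable_on cbox 0 (pi/2)"
      by (intro integrable_continuous continuous_intros)
  next
    show "continuous_on ({..<1} \<times> cbox 0 (pi/2)) (\<lambda>(m, x). ?fx m x)"
      unfolding case_prod_beta by (intro continuous_intros) (auto simp: sqrt_radicand_ne radicand_ne)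
  qed (use m in auto)
  have eq: "?fx m x = (sqrt (1 - m * (sin x)^2) - 1 / sqrt (1 - m * (sin x)^2)) / (2 * m)" for x
    using radicand_pos[of m x] m by (simp add: field_simps)
  have "integral (cbox 0 (pi/2)) (?fx m) = (ellE m - ellK m) / (2 * m)"
    unfolding eq cbox_interval ellE_def ellK_def integral_div_const
    by (subst integral_diff)
       (use m in \<open>auto intro!: integrable_continuous_interval continuous_ellK_integrand continuous_intros\<close>)
  with L show ?thesis
    unfolding ellE_def[abs_def] cbox_interval
    using at_within_open[of m "{..<1}"] m by auto
qed

text \<open>\<open>dK/dm = (E/(1 - m) - K) / (2m)\<close>, using \<open>E = (1 - m) J\<close>.\<close>

lemma ellK_deriv:
  assumes m: "0 < m" "m < 1"
  shows "(ellK has_real_derivative (ellE m / (1 - m) - ellK m) / (2 * m)) (at m)"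
proof -
  let ?fx = "\<lambda>m x. (sin x)^2 / (2 * ((1 - m * (sin x)^2) * sqrt (1 - m * (sin x)^2)))"
  have L: "((\<lambda>m. integral (cbox 0 (pi/2)) (\<lambda>x. 1 / sqrt (1 - m * (sin x)^2))) has_field_derivative
      integral (cbox 0 (pi/2)) (?fx m)) (at m within {..<1})"
  proof (rule leibniz_rule_field_derivative)
    fix m' x :: real assume "m' \<in> {..<1}" "x \<in> cbox 0 (pi/2)"
    then have D: "0 < 1 - m' * (sin x)^2" using radicand_pos by auto
    have s: "sqrt (1 - m' * (sin x)^2) * sqrt (1 - m' * (sin x)^2) = 1 - m' * (sin x)^2"
      using D by simp
    show "((\<lambda>m. 1 / sqrt (1 - m * (sin x)^2)) has_field_derivative ?fx m' x) (at m' within {..<1})"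
      using D by (auto intro!: derivative_eq_intros simp: divide_simps s)
  next
    fix m' :: real assume "m' \<in> {..<1}"
    then show "(\<lambda>x. 1 / sqrt (1 - m' * (sin x)^2)) integrable_on cbox 0 (pi/2)"
      by (intro integrable_continuous continuous_ellK_integrand) simp
  next
    show "continuous_on ({..<1} \<times> cbox 0 (pi/2)) (\<lambda>(m, x). ?fx m x)"
      unfolding case_prod_beta by (intro continuous_intros) (auto simp: sqrt_radicand_ne radicand_ne)
  qed (use m in auto)
  have eq: "?fx m x = (1 / ((1 - m * (sin x)^2) * sqrt (1 - m * (sin x)^2))
                       - 1 / sqrt (1 - m * (sin x)^2)) / (2 * m)" for x
  proof -
    have gen: "q / (2 * (d * r)) = (1 / (d * r) - 1 / r) / (2 * m)"
      if "0 < d" "r \<noteq> 0" "d = 1 - m * q" for q d r :: real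
      using that m by (simp add: field_simps)
    show ?thesis by (rule gen) (use radicand_pos[of m x] m in auto)
  qed
  have "integral (cbox 0 (pi/2)) (?fx m) = (ellJ m - ellK m) / (2 * m)"
    unfolding eq cbox_interval ellJ_def ellK_def integral_div_const
    by (subst integral_diff) (use m in \<open>auto intro!: integrable_continuous_interval
          continuous_ellK_integrand continuous_ellJ_integrand\<close>)
  also have "\<dots> = (ellE m / (1 - m) - ellK m) / (2 * m)" using ellE_eq_ellJ[of m] m by simp
  finally show ?thesis
    using L unfolding ellK_def[abs_def] cbox_interval
    using at_within_open[of m "{..<1}"] m by auto
qed


section \<open>The differential equation for \<open>v\<close>\<close>

text \<open>Writing \<open>t = \<surd>l\<close>, \<open>q = \<surd>(1 + t)\<close> and \<open>m = (1 - t)/(1 + t)\<close>, the chain rule and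
  Legendre's formulas give \<open>v' = -(3/4) K(m) / q\<close> and then \<open>v'' = \<nu> v / (l (1 - l))\<close>.\<close>

lemma mfe_range: "0 < l \<Longrightarrow> l < 1 \<Longrightarrow> 0 < mfe l \<and> mfe l < 1"
proof -
  assume l: "0 < l" "l < 1"
  then have t: "0 < sqrt l" "sqrt l < 1" by (auto simp: real_sqrt_lt_1_iff)
  have g: "0 < (1 - t) / (1 + t) \<and> (1 - t) / (1 + t) < 1" if "0 < t" "t < 1" for t :: real
    using that by (simp add: divide_simps)
  show ?thesis unfolding mfe_def by (rule g[OF t])
qed

lemma mfe_deriv:
  assumes l: "0 < l"
  shows "(mfe has_real_derivative - 1 / (sqrt l * (1 + sqrt l)^2)) (at l)"
proof -
  have t: "0 < sqrt l" using l by simp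
  have nz: "1 + sqrt l \<noteq> 0" "\<not> 1 + sqrt l < 0" using t by linarith+
  show ?thesis unfolding mfe_def[abs_def]
    using t nz by (auto intro!: derivative_eq_intros simp: field_simps power2_eq_square)
qed

lemma sqrt_deriv: "0 < l \<Longrightarrow> DERIV sqrt l :> 1 / (2 * sqrt l)"
  using DERIV_real_sqrt[of l] by (simp add: divide_simps mult.commute)

lemma sqrt_one_plus_sqrt_deriv:
  assumes l: "0 < l"
  shows "DERIV (\<lambda>l. sqrt (1 + sqrt l)) l :> 1 / (2 * sqrt l) / (2 * sqrt (1 + sqrt l))"
proof -
  have "0 < 1 + sqrt l" using l by (simp add: add_pos_pos)
  from DERIV_chain2[OF DERIV_real_sqrt[OF this] DERIV_add[OF DERIV_const sqrt_deriv[OF l]]]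
  show ?thesis using l by (simp add: divide_simps mult.commute)
qed

text \<open>The algebra behind \<open>v' = -(3/4) K / q\<close>, with \<open>u = 1 + t\<close> and \<open>w = 1 - t\<close> kept
  abstract so that the identity is a polynomial one.\<close>

lemma vfe_deriv_algebra0:
  fixes t u w E K :: real
  assumes a: "w \<noteq> 0" "u \<noteq> 0" "t \<noteq> 0" and uw: "u = 1 + t" "w = 1 - t"
  shows "(E - t * K) / (4 * t) + u * ((E - K) / (2 * (w / u)) * (- 1 / (t * u^2))
        - (1 / (2 * t) * K + t * ((E / (2 * t / u) - K) / (2 * (w / u)) * (- 1 / (t * u^2))))) = - (3/4) * K"
  using a by (simp add: field_simps power2_eq_square) (use uw in algebra)

lemma vfe_deriv_algebra:
  fixes t q E K :: real
  assumes t: "0 < t" "t < 1" and q: "0 < q" "q^2 = 1 + t"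
  shows "(1 / (2 * t) / (2 * q)) * (E - t * K) +
     q * ((E - K) / (2 * ((1 - t) / (1 + t))) * (- 1 / (t * (1 + t)^2))
        - (1 / (2 * t) * K + t * ((E / (1 - (1 - t) / (1 + t)) - K) / (2 * ((1 - t) / (1 + t))) * (- 1 / (t * (1 + t)^2)))))
     = - (3/4) * K / q"
proof -
  have a: "1 - t \<noteq> 0" "1 + t \<noteq> 0" "t \<noteq> 0" "q \<noteq> 0" using t q by auto
  have b: "1 - (1 - t) / (1 + t) = 2 * t / (1 + t)" using a by (simp add: field_simps)
  define X where "X = (E - K) / (2 * ((1 - t) / (1 + t))) * (- 1 / (t * (1 + t)^2))
        - (1 / (2 * t) * K + t * ((E / (1 - (1 - t) / (1 + t)) - K) / (2 * ((1 - t) / (1 + t))) * (- 1 / (t * (1 + t)^2))))"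
  have X: "(E - t * K) / (4 * t) + (1 + t) * X = - (3/4) * K"
    unfolding X_def b by (rule vfe_deriv_algebra0) (use a in auto)
  have "(1 / (2 * t) / (2 * q)) * (E - t * K) + q * X = ((E - t * K) / (4 * t) + q^2 * X) / q"
    using a by (simp add: field_simps power2_eq_square)
  also have "\<dots> = - (3/4) * K / q" unfolding q(2) X ..
  finally show ?thesis unfolding X_def .
qed

definition dvfe :: "real \<Rightarrow> real" where
  "dvfe l = - (3/4) * ellK (mfe l) / sqrt (1 + sqrt l)"

lemma vfe_deriv:
  assumes l: "0 < l" "l < 1"
  shows "(vfe has_real_derivative dvfe l) (at l)"
proof -
  define t where "t = sqrt l"
  define q where "q = sqrt (1 + t)"
  define m where "m = mfe l"
  have t: "0 < t" "t < 1" using l by (auto simp: t_def real_sqrt_lt_1_iff)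
  have q: "0 < q" "q^2 = 1 + t" using t by (auto simp: q_def)
  have m: "0 < m" "m < 1" using mfe_range[OF l] by (auto simp: m_def)
  have mt: "m = (1 - t) / (1 + t)" by (simp add: m_def mfe_def t_def)
  note ds = sqrt_deriv[OF l(1), folded t_def]
  note dq = sqrt_one_plus_sqrt_deriv[OF l(1), folded t_def, folded q_def]
  have hE: "DERIV (\<lambda>l. ellE (mfe l)) l :> (ellE m - ellK m) / (2 * m) * (- 1 / (t * (1 + t)^2))"
    using DERIV_chain2[OF ellE_deriv[OF m, unfolded m_def] mfe_deriv[OF l(1)]] by (simp add: m_def t_def)
  have hK: "DERIV (\<lambda>l. ellK (mfe l)) l :> (ellE m / (1 - m) - ellK m) / (2 * m) * (- 1 / (t * (1 + t)^2))"
    using DERIV_chain2[OF ellK_deriv[OF m, unfolded m_def] mfe_deriv[OF l(1)]] by (simp add: m_def t_def)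
  have hsK: "DERIV (\<lambda>l. sqrt l * ellK (mfe l)) l :>
      1 / (2 * t) * ellK m + t * ((ellE m / (1 - m) - ellK m) / (2 * m) * (- 1 / (t * (1 + t)^2)))"
    using DERIV_mult[OF ds hK] by (simp add: m_def t_def algebra_simps)
  have hv: "DERIV vfe l :> (1 / (2 * t) / (2 * q)) * (ellE m - t * ellK m) +
     q * ((ellE m - ellK m) / (2 * m) * (- 1 / (t * (1 + t)^2))
        - (1 / (2 * t) * ellK m + t * ((ellE m / (1 - m) - ellK m) / (2 * m) * (- 1 / (t * (1 + t)^2)))))"
    unfolding vfe_def[abs_def]
    using DERIV_mult[OF dq DERIV_diff[OF hE hsK]] by (simp add: m_def t_def q_def algebra_simps)
  have "(1 / (2 * t) / (2 * q)) * (ellE m - t * ellK m) +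
     q * ((ellE m - ellK m) / (2 * m) * (- 1 / (t * (1 + t)^2))
        - (1 / (2 * t) * ellK m + t * ((ellE m / (1 - m) - ellK m) / (2 * m) * (- 1 / (t * (1 + t)^2)))))
     = - (3/4) * ellK m / q"
    unfolding mt by (rule vfe_deriv_algebra[OF t q])
  with hv show ?thesis by (simp add: dvfe_def m_def t_def q_def)
qed

lemma dvfe_deriv_algebra0:
  fixes t u w E K :: real
  assumes a: "w \<noteq> 0" "u \<noteq> 0" "t \<noteq> 0" and uw: "u = 1 + t" "w = 1 - t"
  shows "(- (3/4) * (((E / (2 * t / u) - K) / (2 * (w / u))) * (- 1 / (t * u^2))) + (3/4) * K / (4 * t * u)) / u
     = (3/16) * (E - t * K) / (t^2 * (w * u))"
  using a by (simp add: field_simps power2_eq_square) (use uw in algebra)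

lemma dvfe_deriv_algebra:
  fixes t q E K :: real
  assumes t: "0 < t" "t < 1" and q: "0 < q" "q^2 = 1 + t"
  shows "((- (3/4) * (((E / (1 - (1 - t) / (1 + t)) - K) / (2 * ((1 - t) / (1 + t)))) * (- 1 / (t * (1 + t)^2)))) * q
          - (- (3/4) * K) * (1 / (2 * t) / (2 * q))) / (q * q)
       = (3/16) * (q * (E - t * K)) / (t^2 * (1 - t^2))"
proof -
  have a: "1 - t \<noteq> 0" "1 + t \<noteq> 0" "t \<noteq> 0" "q \<noteq> 0" using t q by auto
  have b: "1 - (1 - t) / (1 + t) = 2 * t / (1 + t)" using a by (simp add: field_simps)
  have qq: "q * q = 1 + t" using q by (simp add: power2_eq_square)
  have c: "1 / (2 * t) / (2 * q) = q / (4 * t * (1 + t))"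
    using a by (simp add: field_simps flip: qq)
  have d: "1 - t^2 = (1 - t) * (1 + t)" by (simp add: algebra_simps power2_eq_square)
  define A where "A = ((E / (2 * t / (1 + t)) - K) / (2 * ((1 - t) / (1 + t)))) * (- 1 / (t * (1 + t)^2))"
  have "((- (3/4) * A) * q - (- (3/4) * K) * (q / (4 * t * (1 + t)))) / (1 + t)
        = q * ((- (3/4) * A + (3/4) * K / (4 * t * (1 + t))) / (1 + t))"
    using a by (simp add: field_simps)
  also have "(- (3/4) * A + (3/4) * K / (4 * t * (1 + t))) / (1 + t) = (3/16) * (E - t * K) / (t^2 * ((1 - t) * (1 + t)))"
    unfolding A_def by (rule dvfe_deriv_algebra0) (use a in auto)
  finally show ?thesis unfolding b c qq d A_def by simp
qed

lemma dvfe_deriv: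
  assumes l: "0 < l" "l < 1"
  shows "(dvfe has_real_derivative nfe * vfe l / (l * (1 - l))) (at l)"
proof -
  define t where "t = sqrt l"
  define q where "q = sqrt (1 + t)"
  define m where "m = mfe l"
  have t: "0 < t" "t < 1" using l by (auto simp: t_def real_sqrt_lt_1_iff)
  have q: "0 < q" "q^2 = 1 + t" using t by (auto simp: q_def)
  have m: "0 < m" "m < 1" using mfe_range[OF l] by (auto simp: m_def)
  have mt: "m = (1 - t) / (1 + t)" by (simp add: m_def mfe_def t_def)
  note dq = sqrt_one_plus_sqrt_deriv[OF l(1), folded t_def, folded q_def]
  have hK: "DERIV (\<lambda>l. - (3/4) * ellK (mfe l)) l :> - (3/4) * ((ellE m / (1 - m) - ellK m) / (2 * m) * (- 1 / (t * (1 + t)^2)))"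
    using DERIV_cmult[OF DERIV_chain2[OF ellK_deriv[OF m, unfolded m_def] mfe_deriv[OF l(1)]], of "- (3/4)"]
    by (simp add: m_def t_def)
  have qnz: "sqrt (1 + sqrt l) \<noteq> 0" using q by (simp add: q_def t_def)
  have hv: "DERIV dvfe l :> ((- (3/4) * ((ellE m / (1 - m) - ellK m) / (2 * m) * (- 1 / (t * (1 + t)^2)))) * q
          - (- (3/4) * ellK m) * (1 / (2 * t) / (2 * q))) / (q * q)"
    unfolding dvfe_def[abs_def]
    using DERIV_divide[OF hK dq qnz] by (simp add: m_def t_def q_def)
  have "((- (3/4) * ((ellE m / (1 - m) - ellK m) / (2 * m) * (- 1 / (t * (1 + t)^2)))) * q
          - (- (3/4) * ellK m) * (1 / (2 * t) / (2 * q))) / (q * q)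
       = (3/16) * (q * (ellE m - t * ellK m)) / (t^2 * (1 - t^2))"
    unfolding mt by (rule dvfe_deriv_algebra[OF t q])
  also have "\<dots> = nfe * vfe l / (l * (1 - l))"
    using l by (simp add: nfe_def vfe_def m_def t_def q_def)
  finally show ?thesis using hv by simp
qed


section \<open>Behaviour of \<open>v\<close> as \<open>l \<rightarrow> 0\<close>\<close>

text \<open>As \<open>l \<rightarrow> 0\<close> the modulus \<open>m \<rightarrow> 1\<close>. Since \<open>E(1) = 1\<close> and \<open>K\<close> has the logarithmic
  singularity \<open>K(1 - \<epsilon>) = ln(4/\<surd>\<epsilon>) + o(1)\<close>, we get \<open>v \<rightarrow> 1\<close> and
  \<open>v' - \<nu> ln l \<rightarrow> -(9/8) ln 2\<close>, the same boundary behaviour as \<open>W\<close>. The singularity of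
  \<open>K(1 - \<epsilon>)\<close> is isolated by subtracting \<open>sin\<phi> / \<surd>(cos\<^sup>2\<phi> + \<epsilon>)\<close>, whose integral is
  elementary; the difference converges dominatedly to \<open>cos\<phi> / (1 + sin\<phi>)\<close>, of integral \<open>ln 2\<close>.\<close>

lemma log_singularity_integral:
  assumes e: "0 < e"
  shows "((\<lambda>x. sin x / sqrt ((cos x)^2 + e)) has_integral (ln (1 + sqrt (1 + e)) - ln (sqrt e))) {0..pi/2}"
proof -
  have pos: "0 < cos x + sqrt ((cos x)^2 + e)" for x :: real
  proof -
    have "\<bar>cos x\<bar> < sqrt ((cos x)^2 + e)"
      using e by (intro real_less_rsqrt) (simp add: power2_abs)
    then show ?thesis by linarith
  qed
  have "((\<lambda>x. sin x / sqrt ((cos x)^2 + e)) has_integral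
      ((- ln (cos (pi/2) + sqrt ((cos (pi/2))^2 + e))) - (- ln (cos 0 + sqrt ((cos 0)^2 + e))))) {0..pi/2}"
  proof (rule fundamental_theorem_of_calculus)
    show "0 \<le> pi/2" by simp
    fix x :: real
    have s: "0 < (cos x)^2 + e" using e by (simp add: add_nonneg_pos)
    have r: "sqrt ((cos x)^2 + e) \<noteq> 0" using s by simp
    have "((\<lambda>x. - ln (cos x + sqrt ((cos x)^2 + e))) has_real_derivative sin x / sqrt ((cos x)^2 + e)) (at x)"
    proof -
      have g: "- ((- s' - inverse A * (s' * c)) / (c + A)) = s' / A" if "A \<noteq> 0" "c + A \<noteq> 0" for s' c A :: real
      proof -
        have "- s' - inverse A * (s' * c) = - s' * (c + A) / A" using that by (simp add: field_simps)
        then show ?thesis using that by simp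
      qed
      show ?thesis using pos[of x] s r
        by (auto intro!: derivative_eq_intros simp: g)
    qed
    then show "((\<lambda>x. - ln (cos x + sqrt ((cos x)^2 + e))) has_vector_derivative sin x / sqrt ((cos x)^2 + e)) (at x within {0..pi/2})"
      unfolding has_real_derivative_iff_has_vector_derivative by (rule has_vector_derivative_at_within)
  qed
  then show ?thesis by simp
qed

lemma cos_over_one_plus_sin_integral: "((\<lambda>x. cos x / (1 + sin x)) has_integral ln 2) {0..pi/2}"
proof -
  have "((\<lambda>x. cos x / (1 + sin x)) has_integral (ln (1 + sin (pi/2)) - ln (1 + sin 0))) {0..pi/2}"
  proof (rule fundamental_theorem_of_calculus)
    show "0 \<le> pi/2" by simp
    fix x :: real assume x: "x \<in> {0..pi/2}"
    then have "0 \<le> sin x" by (auto intro!: sin_ge_zero)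
    then have p: "0 < 1 + sin x" by linarith
    have "((\<lambda>x. ln (1 + sin x)) has_real_derivative cos x / (1 + sin x)) (at x)"
      using p by (auto intro!: derivative_eq_intros simp: field_simps)
    then show "((\<lambda>x. ln (1 + sin x)) has_vector_derivative cos x / (1 + sin x)) (at x within {0..pi/2})"
      unfolding has_real_derivative_iff_has_vector_derivative by (rule has_vector_derivative_at_within)
  qed
  then show ?thesis by simp
qed

text \<open>The key cancellation: for \<open>s = sin\<phi>, c = cos\<phi>\<close> with \<open>A = \<surd>(c\<^sup>2 + \<epsilon>)\<close>,
  \<open>B = \<surd>(c\<^sup>2 + \<epsilon> s\<^sup>2)\<close> one has \<open>0 \<le> 1/B - s/A \<le> c\<close>, uniformly in \<open>\<epsilon>\<close>.\<close>

lemma reciprocal_difference_bounds: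
  fixes s c A B :: real
  assumes s: "0 \<le> s" "s \<le> 1" and c: "0 \<le> c" and sc: "s^2 + c^2 = 1"
    and AB: "0 < B" "B \<le> A" "s * A \<le> B" "c \<le> B"
  shows "0 \<le> 1 / B - s / A" and "1 / B - s / A \<le> c"
proof -
  have A0: "0 < A" using AB by linarith
  have eq: "1 / B - s / A = (A - s * B) / (A * B)" using A0 AB by (simp add: field_simps)
  have "s * B \<le> 1 * B" using s AB by (intro mult_right_mono) auto
  then have "0 \<le> A - s * B" using AB by linarith
  then show "0 \<le> 1 / B - s / A" unfolding eq using A0 AB by simp
  have "s * (s * A) \<le> s * B" using AB s by (intro mult_left_mono) auto
  then have "A - s * B \<le> A - s^2 * A" by (simp add: power2_eq_square algebra_simps)
  also have "\<dots> = c^2 * A" using sc by algebra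
  finally have "(A - s * B) / (A * B) \<le> c^2 * A / (A * B)"
    using A0 AB by (intro divide_right_mono) auto
  also have "\<dots> = c^2 / B" using A0 by simp
  also have "\<dots> \<le> c"
    using mult_left_mono[OF AB(4) c] AB by (simp add: power2_eq_square divide_le_eq)
  finally show "1 / B - s / A \<le> c" unfolding eq .
qed

lemma ellK_remainder_bounds:
  fixes s c e :: real
  assumes s: "0 \<le> s" and c: "0 \<le> c" and sc: "s^2 + c^2 = 1" and e: "0 < e"
  shows "0 \<le> 1 / sqrt (c^2 + e * s^2) - s / sqrt (c^2 + e)"
    and "1 / sqrt (c^2 + e * s^2) - s / sqrt (c^2 + e) \<le> c"
proof -
  have s1: "s \<le> 1" using sc c by (smt (verit) power2_le_imp_le zero_le_power2 one_power2)
  have "0 < c^2 + e * s^2"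
  proof (cases "s = 0")
    case True then show ?thesis using sc by simp
  next
    case False then show ?thesis using e by (simp add: add_nonneg_pos)
  qed
  then have B0: "0 < sqrt (c^2 + e * s^2)" by simp
  have BA: "sqrt (c^2 + e * s^2) \<le> sqrt (c^2 + e)"
    by (rule real_sqrt_le_mono) (use e s1 s in \<open>simp add: mult_left_le_one_le power_le_one\<close>)
  have "(s * sqrt (c^2 + e))^2 \<le> c^2 + e * s^2"
  proof -
    have "s^2 * c^2 \<le> c^2" using s1 s by (simp add: mult_left_le_one_le power_le_one)
    then show ?thesis using e by (simp add: power_mult_distrib add_nonneg_nonneg algebra_simps)
  qed
  then have sAB: "s * sqrt (c^2 + e) \<le> sqrt (c^2 + e * s^2)"
    by (rule real_le_rsqrt)
  have cB: "c \<le> sqrt (c^2 + e * s^2)"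
    using e c by (simp add: real_le_rsqrt)
  show "0 \<le> 1 / sqrt (c^2 + e * s^2) - s / sqrt (c^2 + e)"
    and "1 / sqrt (c^2 + e * s^2) - s / sqrt (c^2 + e) \<le> c"
    using reciprocal_difference_bounds[OF s s1 c sc B0 BA sAB cB] by auto
qed

lemma sin_cos_nonneg:
  fixes x :: real assumes "x \<in> {0..pi/2}"
  shows "0 \<le> sin x" "0 \<le> cos x"
  using assms by (auto intro!: sin_ge_zero cos_ge_zero)

definition ellK_remainder :: "real \<Rightarrow> real \<Rightarrow> real" where
  "ellK_remainder e x = 1 / sqrt (1 - (1 - e) * (sin x)^2) - sin x / sqrt ((cos x)^2 + e)"

lemma radicand_complement: fixes e x :: real shows "1 - (1 - e) * (sin x)^2 = (cos x)^2 + e * (sin x)^2"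
proof -
  have "(sin x)^2 + (cos x)^2 = 1" by (rule sin_cos_squared_add)
  then show ?thesis by algebra
qed

lemma ellK_remainder_bound:
  assumes e: "0 < e" and x: "x \<in> {0..pi/2}"
  shows "\<bar>ellK_remainder e x\<bar> \<le> 1"
proof -
  note cs = sin_cos_nonneg[OF x]
  have "0 \<le> ellK_remainder e x" "ellK_remainder e x \<le> cos x"
    unfolding ellK_remainder_def radicand_complement using ellK_remainder_bounds[OF cs(1) cs(2) _ e] by auto
  moreover have "cos x \<le> 1" by (rule cos_le_one)
  ultimately show ?thesis by linarith
qed

lemma ellK_remainder_tendsto:
  assumes S: "S \<longlonglongrightarrow> 0" "\<And>n. 0 < S n" and x: "x \<in> {0..pi/2}"
  shows "(\<lambda>n. ellK_remainder (S n) x) \<longlonglongrightarrow> cos x / (1 + sin x)"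
proof (cases "cos x = 0")
  case True
  have "sin x = 1"
  proof -
    have "(sin x)^2 = 1" using True sin_cos_squared_add[of x] by simp
    then show ?thesis using sin_cos_nonneg(1)[OF x] by (smt (verit) power2_eq_1_iff)
  qed
  then have "ellK_remainder (S n) x = 0" for n using True by (simp add: ellK_remainder_def)
  then show ?thesis using True by simp
next
  case False
  note cs = sin_cos_nonneg[OF x]
  have c0: "0 < cos x" using False cs by simp
  have sn: "(sin x)^2 \<noteq> 1"
  proof
    assume "(sin x)^2 = 1"
    then have "(cos x)^2 = 0" using sin_cos_squared_add[of x] by simp
    then show False using c0 by simp
  qed
  have "(\<lambda>n. ellK_remainder (S n) x) \<longlonglongrightarrow> 1 / sqrt (1 - (1 - 0) * (sin x)^2) - sin x / sqrt ((cos x)^2 + 0)"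
    unfolding ellK_remainder_def using sn by (intro tendsto_intros S(1)) (use c0 in \<open>auto simp: radicand_complement\<close>)
  also have "1 / sqrt (1 - (1 - 0) * (sin x)^2) - sin x / sqrt ((cos x)^2 + 0) = cos x / (1 + sin x)"
  proof -
    have a: "1 - (1 - 0) * (sin x)^2 = (cos x)^2" by (simp add: cos_squared_eq)
    have b: "1 + sin x \<noteq> 0" using cs by linarith
    have "(1 - sin x) * (1 + sin x) = (cos x)^2" by (simp add: cos_squared_eq algebra_simps power2_eq_square)
    then show ?thesis unfolding a using c0 b by (simp add: field_simps)
  qed
  finally show ?thesis .
qed

lemma ellK_remainder_integral:
  assumes e: "0 < e"
  shows "(ellK_remainder e has_integral ellK (1 - e) - (ln (1 + sqrt (1 + e)) - ln (sqrt e))) {0..pi/2}"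
proof -
  have "(\<lambda>x. 1 / sqrt (1 - (1 - e) * (sin x)^2)) integrable_on {0..pi/2}"
    by (intro integrable_continuous_interval continuous_ellK_integrand) (use e in auto)
  then have "((\<lambda>x. 1 / sqrt (1 - (1 - e) * (sin x)^2)) has_integral ellK (1 - e)) {0..pi/2}"
    by (simp add: ellK_def has_integral_integral)
  then show ?thesis
    unfolding ellK_remainder_def[abs_def] by (intro has_integral_diff log_singularity_integral e)
qed

lemma ellK_log_asymptotics:
  "((\<lambda>e. ellK (1 - e) - (ln (1 + sqrt (1 + e)) - ln (sqrt e))) \<longlongrightarrow> ln 2) (at_right 0)"
proof (rule tendsto_at_right_sequentially[where b=1])
  fix S :: "nat \<Rightarrow> real"
  assume S: "\<And>n. 0 < S n" "\<And>n. S n < 1" "decseq S" "S \<longlonglongrightarrow> 0"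
  note R = ellK_remainder_integral[OF S(1)]
  have "(\<lambda>n. integral {0..pi/2} (ellK_remainder (S n)))
          \<longlonglongrightarrow> integral {0..pi/2} (\<lambda>x. cos x / (1 + sin x))"
  proof (rule dominated_convergence(2)[where h="\<lambda>_. 1"])
    show "ellK_remainder (S n) integrable_on {0..pi/2}" for n
      using R by blast
    show "(\<lambda>_. 1::real) integrable_on {0..pi/2}" by (rule integrable_continuous_interval) simp
    show "norm (ellK_remainder (S n) x) \<le> 1" if "x \<in> {0..pi/2}" for n x
      using ellK_remainder_bound[OF S(1) that] by simp
    show "(\<lambda>n. ellK_remainder (S n) x) \<longlonglongrightarrow> cos x / (1 + sin x)" if "x \<in> {0..pi/2}" for x
      using that by (rule ellK_remainder_tendsto[OF S(4) S(1)])
  qed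
  then show "(\<lambda>n. ellK (1 - S n) - (ln (1 + sqrt (1 + S n)) - ln (sqrt (S n)))) \<longlonglongrightarrow> ln 2"
    unfolding integral_unique[OF R] integral_unique[OF cos_over_one_plus_sin_integral] .
qed simp

text \<open>\<open>|E(m) - 1| \<le> (\<pi>/2) \<surd>(1 - m)\<close>, comparing the integrand with \<open>cos\<phi>\<close>.\<close>

lemma ellE_near_1:
  assumes m: "0 < m" "m < 1"
  shows "\<bar>ellE m - 1\<bar> \<le> pi / 2 * sqrt (1 - m)"
proof -
  let ?g = "\<lambda>x. sqrt (1 - m * (sin x)^2) - cos x"
  have i1: "(\<lambda>x. sqrt (1 - m * (sin x)^2)) integrable_on {0..pi/2}"
    by (intro integrable_continuous_interval continuous_intros)
  have i2: "cos integrable_on {0..pi/2}"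
    by (intro integrable_continuous_interval continuous_intros)
  have ig: "?g integrable_on {0..pi/2}" by (rule integrable_diff[OF i1 i2])
  have eq: "ellE m - 1 = integral {0..pi/2} ?g"
    unfolding ellE_def by (subst integral_diff[OF i1 i2]) simp
  have gb: "0 \<le> ?g x \<and> ?g x \<le> sqrt (1 - m)" if x: "x \<in> {0..pi/2}" for x
  proof -
    have c: "0 \<le> cos x" using x by (auto intro!: cos_ge_zero)
    have cs: "cos x = sqrt (1 - (sin x)^2)" using c by (simp add: cos_squared_eq[symmetric])
    have s1: "(sin x)^2 \<le> 1" by (simp add: abs_square_le_1 abs_sin_le_one)
    have a: "1 - (sin x)^2 \<le> 1 - m * (sin x)^2"
      using m s1 by (simp add: mult_left_le_one_le)
    have b: "0 \<le> 1 - (sin x)^2" using s1 by simp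
    have "sqrt (1 - m * (sin x)^2) \<le> sqrt (1 - (sin x)^2) + sqrt ((1 - m * (sin x)^2) - (1 - (sin x)^2))"
      using sqrt_add_le_add_sqrt[OF b, of "(1 - m * (sin x)^2) - (1 - (sin x)^2)"] a by simp
    moreover have "sqrt ((1 - m * (sin x)^2) - (1 - (sin x)^2)) \<le> sqrt (1 - m)"
    proof (rule real_sqrt_le_mono)
      have "(1 - m) * (sin x)^2 \<le> (1 - m) * 1" using m s1 by (intro mult_left_mono) auto
      then show "(1 - m * (sin x)^2) - (1 - (sin x)^2) \<le> 1 - m" by (simp add: algebra_simps)
    qed
    moreover have "sqrt (1 - (sin x)^2) \<le> sqrt (1 - m * (sin x)^2)" using a by simp
    ultimately show ?thesis unfolding cs by linarith
  qed
  have "0 \<le> integral {0..pi/2} ?g" by (rule integral_nonneg[OF ig]) (use gb in auto)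
  moreover have "integral {0..pi/2} ?g \<le> integral {0..pi/2} (\<lambda>x. sqrt (1 - m))"
    by (rule integral_le[OF ig]) (use gb in auto)
  ultimately show ?thesis unfolding eq by simp
qed

definition ellK_log_part :: "real \<Rightarrow> real" where
  "ellK_log_part x = ln (1 + sqrt (1 + (1 - mfe x))) - ln (sqrt (1 - mfe x))"

lemma ellK_mfe_asymptotics: "((\<lambda>x. ellK (mfe x) - ellK_log_part x) \<longlongrightarrow> ln 2) (at_right 0)"
proof -
  have F: "filterlim (\<lambda>x. 1 - mfe x) (at_right 0) (at_right 0)"
    unfolding mfe_def by real_asymp
  from filterlim_compose[OF ellK_log_asymptotics F] show ?thesis by (simp add: ellK_log_part_def)
qed

text \<open>\<open>v' = -(3/4) K(m) / q\<close> with \<open>K(m) = ln 2 + (log part) + o(1)\<close>; the log part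
  contributes \<open>\<nu> ln l - (3/8) ln 2 + o(1)\<close>, an elementary expansion.\<close>

lemma dvfe_tendsto_0: "((\<lambda>x. dvfe x - nfe * ln x) \<longlongrightarrow> - (9/8) * ln 2) (at_right 0)"
proof -
  have C: "((\<lambda>x. - (3/4) * ellK_log_part x / sqrt (1 + sqrt x) - 3/16 * ln x) \<longlongrightarrow> - (3/8) * ln 2) (at_right 0)"
    unfolding ellK_log_part_def mfe_def by real_asymp
  have q: "((\<lambda>x::real. sqrt (1 + sqrt x)) \<longlongrightarrow> 1) (at_right 0)" by real_asymp
  have A: "((\<lambda>x. - (3/4) * (ellK (mfe x) - ellK_log_part x) / sqrt (1 + sqrt x)) \<longlongrightarrow> - (3/4) * ln 2 / 1) (at_right 0)"
    by (intro tendsto_intros ellK_mfe_asymptotics q) simp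
  have "((\<lambda>x. - (3/4) * (ellK (mfe x) - ellK_log_part x) / sqrt (1 + sqrt x) + (- (3/4) * ellK_log_part x / sqrt (1 + sqrt x) - 3/16 * ln x))
        \<longlongrightarrow> - (3/4) * ln 2 / 1 + - (3/8) * ln 2) (at_right 0)"
    by (rule tendsto_add[OF A C])
  moreover have "(\<lambda>x. - (3/4) * (ellK (mfe x) - ellK_log_part x) / sqrt (1 + sqrt x) + (- (3/4) * ellK_log_part x / sqrt (1 + sqrt x) - 3/16 * ln x))
      = (\<lambda>x. dvfe x - nfe * ln x)"
    by (rule ext) (simp add: dvfe_def nfe_def diff_divide_distrib add_divide_distrib algebra_simps)
  ultimately show ?thesis by simp
qed

text \<open>\<open>v \<rightarrow> 1\<close>, since \<open>E(m) \<rightarrow> 1\<close> and \<open>\<surd>l K(m) \<rightarrow> 0\<close>.\<close>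

lemma vfe_tendsto_0: "(vfe \<longlongrightarrow> 1) (at_right 0)"
proof -
  have E: "((\<lambda>x. ellE (mfe x)) \<longlongrightarrow> 1) (at_right 0)"
  proof -
    have "((\<lambda>x. ellE (mfe x) - 1) \<longlongrightarrow> 0) (at_right 0)"
    proof (rule Lim_null_comparison)
      show "\<forall>\<^sub>F x in at_right 0. norm (ellE (mfe x) - 1) \<le> pi / 2 * sqrt (1 - mfe x)"
        using eventually_at_right_0_unit by eventually_elim (use mfe_range ellE_near_1 in auto)
      show "((\<lambda>x. pi / 2 * sqrt (1 - mfe x)) \<longlongrightarrow> 0) (at_right 0)"
        unfolding mfe_def by real_asymp
    qed
    then show ?thesis by (simp add: LIM_zero_iff)
  qed
  have SJ: "((\<lambda>x. sqrt x * ellK_log_part x) \<longlongrightarrow> 0) (at_right 0)"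
    unfolding ellK_log_part_def mfe_def by real_asymp
  have s0: "((\<lambda>x::real. sqrt x) \<longlongrightarrow> 0) (at_right 0)" by real_asymp
  have q: "((\<lambda>x::real. sqrt (1 + sqrt x)) \<longlongrightarrow> 1) (at_right 0)" by real_asymp
  have "((\<lambda>x. sqrt (1 + sqrt x) * (ellE (mfe x) - (sqrt x * (ellK (mfe x) - ellK_log_part x) + sqrt x * ellK_log_part x)))
       \<longlongrightarrow> 1 * (1 - (0 * ln 2 + 0))) (at_right 0)"
    by (intro tendsto_intros q E s0 ellK_mfe_asymptotics SJ)
  moreover have "(\<lambda>x. sqrt (1 + sqrt x) * (ellE (mfe x) - (sqrt x * (ellK (mfe x) - ellK_log_part x) + sqrt x * ellK_log_part x))) = vfe"
    by (rule ext) (simp add: vfe_def algebra_simps)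
  ultimately show ?thesis by simp
qed


section \<open>The expansion of \<open>v\<close>\<close>

text \<open>\<open>W - v\<close> solves the equation with vanishing data at \<open>0\<^sup>+\<close>, hence \<open>W = v\<close>.\<close>

lemma W_eq_vfe:
  assumes l: "0 < l" "l < 1"
  shows "W l = vfe l"
proof -
  have "(\<lambda>x. W x - vfe x) l = 0"
  proof (rule ode_unique[of "\<lambda>x. W x - vfe x" "\<lambda>x. W' x - dvfe x" "\<lambda>x. W'' x - nfe * vfe x / (x * (1 - x))" nfe])
    fix x :: real assume x: "0 < x" "x < 1"
    show "((\<lambda>x. W x - vfe x) has_real_derivative W' x - dvfe x) (at x)"
      by (rule DERIV_diff[OF W_deriv[OF x] vfe_deriv[OF x]])
    show "((\<lambda>x. W' x - dvfe x) has_real_derivative W'' x - nfe * vfe x / (x * (1 - x))) (at x)"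
      by (rule DERIV_diff[OF W'_deriv[OF x] dvfe_deriv[OF x]])
    show "x * (1 - x) * (W'' x - nfe * vfe x / (x * (1 - x))) = nfe * (W x - vfe x)"
      using W_ode[OF x] x by (simp add: right_diff_distrib)
  next
    show "((\<lambda>x. W x - vfe x) \<longlongrightarrow> 0) (at_right 0)"
      using tendsto_diff[OF W_tendsto_0 vfe_tendsto_0] by simp
    show "((\<lambda>x. W' x - dvfe x) \<longlongrightarrow> 0) (at_right 0)"
      using tendsto_diff[OF W'_tendsto_0 dvfe_tendsto_0] by simp
  qed (use l in \<open>auto simp: nfe_def\<close>)
  then show ?thesis by simp
qed

lemma vfe_series:
  assumes l: "0 < l" "l < 1"
  shows "(\<lambda>i. (- (9/8) * ln 2 * afe i + nfe * bfe (i+1) + nfe * afe i * ln l) * l ^ (i+1))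
           sums (vfe l - 1)"
proof -
  have al: "\<bar>l\<bar> < 1" using l by simp
  have A: "(\<lambda>i. afe i * l ^ Suc i) sums powser (shift afe) l"
    using sums_mult[OF powser_sums[OF unit_radius_afe al], of l]
    by (simp add: powser_shift[OF unit_radius_afe al] algebra_simps)
  have B: "(\<lambda>i. bfe (Suc i) * l ^ Suc i) sums (powser bfe l - bfe 0)"
    using sums_Suc_iff[of "\<lambda>n. bfe n * l ^ n"] powser_sums[OF unit_radius_bfe al] by simp
  have "(\<lambda>i. (- (9/8) * ln 2 + nfe * ln l) * (afe i * l ^ Suc i) + nfe * (bfe (Suc i) * l ^ Suc i))
        sums ((- (9/8) * ln 2 + nfe * ln l) * powser (shift afe) l + nfe * (powser bfe l - bfe 0))"
    by (intro sums_add sums_mult A B)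
  moreover have "(- (9/8) * ln 2 + nfe * ln l) * powser (shift afe) l + nfe * (powser bfe l - bfe 0)
      = vfe l - 1"
    using W_eq_vfe[OF l] by (simp add: W_def nfe_def algebra_simps)
  moreover have "(\<lambda>i. (- (9/8) * ln 2 + nfe * ln l) * (afe i * l ^ Suc i) + nfe * (bfe (Suc i) * l ^ Suc i))
      = (\<lambda>i. (- (9/8) * ln 2 * afe i + nfe * bfe (i+1) + nfe * afe i * ln l) * l ^ (i+1))"
    by (simp add: algebra_simps)
  ultimately show ?thesis by simp
qed

lemma afe_initial: "afe 0 = 1" "afe 1 = 3/32" "afe 2 = 35/1024"
  by (simp_all add: afe.simps nfe_def numeral_2_eq_2)

lemma bfe_initial: "bfe 1 = -1" "bfe 2 = 17/64" "bfe 3 = 59/512"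
  by (simp_all add: afe.simps nfe_def numeral_2_eq_2 numeral_3_eq_3)

theorem mainTheorem5:
  fixes l :: real
  assumes "0 < l" and "l < 1"
  shows "((\<lambda>i. (- (9/8) * ln 2 * afe i + nfe * bfe (i+1) + nfe * afe i * ln l) * l ^ (i+1))
           sums (vfe l - 1)) \<and>
         - (9/8) * ln 2 * afe 0 + nfe * bfe 1 = - ((9/8) * ln 2 + 3/16) \<and>
         - (9/8) * ln 2 * afe 1 + nfe * bfe 2 = - ((27/256) * ln 2 - 51/1024) \<and>
         - (9/8) * ln 2 * afe 2 + nfe * bfe 3 = - ((315/8192) * ln 2 - 177/8192) \<and>
         nfe * afe 0 = 3/16 \<and> nfe * afe 1 = 9/512 \<and> nfe * afe 2 = 105/16384"
  using vfe_series[OF assms] unfolding afe_initial bfe_initial by (simp add: nfe_def)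

end
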